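(* Let $n$ be even, $1\le q_n\le n/2$, $I_n=\{(i_1,\dots,i_{q_n}):1\le i_1<\dots<i_{q_n}\le n\}$, and for $R=(i_1,\dots,i_{q_n})\in I_n$ let $\Psi_R=\psi_{i_1}\cdots\psi_{i_{q_n}}\,i^{\lfloor q_n/2\rfloor}$. Let $\alpha:[k]\to I_n$ and write $\Psi_\alpha=\Psi_{\alpha(1)}\cdots\Psi_{\alpha(k)}$. Then: (i) if every block of $\ker\alpha$ has even size, then $\Psi_\alpha=\pm I$; (ii) for every pair partition $\pi\in\mathcal{P}_2(k)$ with $\ker\alpha\ge\pi$, $$\operatorname{tr}(\Psi_\alpha)=(-1)^{q_n\,cr(\pi)+\sum|\alpha(V)\cap\alpha(W)|},$$ where the sum runs over all unordered pairs $\{V,W\}$ of crossing blocks of $\pi$.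
   Context: $\psi_1,\dots,\psi_n$ are Majorana fermions: $2^{n/2}\times2^{n/2}$ matrices with $\psi_i\psi_j+\psi_j\psi_i=2\delta_{ij}I$, realized as $\psi_j=\sigma_3^{\otimes(j-1)}\otimes\sigma_1\otimes 1^{\otimes(n/2-j)}$, $\psi_{n/2+j}=\sigma_3^{\otimes(j-1)}\otimes\sigma_2\otimes 1^{\otimes(n/2-j)}$ with Pauli matrices. $\operatorname{tr}$ is the normalized trace. $\ker\alpha$ is the partition of $[k]=\{1,\dots,k\}$ into nonempty level sets of $\alpha$; for a block $B$ of $\ker\alpha$ (or of a partition below it), $\alpha(B)$ is the common value of $\alpha$ on $B$. $\pi\le\sigma$ means every block of $\pi$ is contained in a block of $\sigma$. $\mathcal{P}_2(k)$ is the set of pair partitions of $[k]$; blocks $\{v_1<v_2\},\{w_1<w_2\}$ cross if $v_1<w_1<v_2<w_2$ or $w_1<v_1<w_2<v_2$, and $cr(\pi)$ is the number of crossing pairs of blocks. For $Q,R\in I_n$, $|Q\cap R|$ is the number of common indices. *)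

theory Defs
  imports Complex_Main "Jordan_Normal_Form.Matrix"
begin

definition kron :: "complex mat \<Rightarrow> complex mat \<Rightarrow> complex mat" where
  "kron A B = mat (dim_row A * dim_row B) (dim_col A * dim_col B)
     (\<lambda>(i, j). A $$ (i div dim_row B, j div dim_col B) * B $$ (i mod dim_row B, j mod dim_col B))"

definition kron_list :: "complex mat list \<Rightarrow> complex mat" where
  "kron_list Ms = foldr kron Ms (1\<^sub>m 1)"

definition sigma1 :: "complex mat" where
  "sigma1 = mat_of_rows_list 2 [[0, 1], [1, 0]]"

definition sigma2 :: "complex mat" where
  "sigma2 = mat_of_rows_list 2 [[0, -\<i>], [\<i>, 0]]"

definition sigma3 :: "complex mat" where
  "sigma3 = mat_of_rows_list 2 [[1, 0], [0, -1]]"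

definition ntr :: "complex mat \<Rightarrow> complex" where
  "ntr A = (\<Sum>i<dim_row A. A $$ (i, i)) / of_nat (dim_row A)"

definition mat_prod_list :: "nat \<Rightarrow> complex mat list \<Rightarrow> complex mat" where
  "mat_prod_list N Ms = foldr (*) Ms (1\<^sub>m N)"

definition majorana :: "nat \<Rightarrow> nat \<Rightarrow> complex mat" where
  "majorana n j =
    (let m = n div 2 in
     if 1 \<le> j \<and> j \<le> m then
       kron_list (replicate (j - 1) sigma3 @ [sigma1] @ replicate (m - j) (1\<^sub>m 2))
     else
       kron_list (replicate (j - m - 1) sigma3 @ [sigma2] @ replicate (m - (j - m)) (1\<^sub>m 2)))"

text \<open>I_n: increasing q-tuples of indices in [n], represented as q-element subsets of {1..n}
  (an increasing tuple is the same as its set of entries, listed in increasing order).\<close>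
definition index_tuples :: "nat \<Rightarrow> nat \<Rightarrow> nat set set" where
  "index_tuples n q = {R. R \<subseteq> {1..n} \<and> card R = q}"

definition Psi :: "nat \<Rightarrow> nat \<Rightarrow> nat set \<Rightarrow> complex mat" where
  "Psi n q R = \<i> ^ (q div 2) \<cdot>\<^sub>m
      mat_prod_list (2 ^ (n div 2)) (map (majorana n) (sorted_list_of_set R))"

definition Psi_alpha :: "nat \<Rightarrow> nat \<Rightarrow> nat \<Rightarrow> (nat \<Rightarrow> nat set) \<Rightarrow> complex mat" where
  "Psi_alpha n q k \<alpha> = mat_prod_list (2 ^ (n div 2)) (map (\<lambda>i. Psi n q (\<alpha> i)) [1..<k+1])"

definition is_partition :: "'a set set \<Rightarrow> 'a set \<Rightarrow> bool" where
  "is_partition P S \<longleftrightarrow> (\<forall>B\<in>P. B \<noteq> {}) \<and> \<Union>P = S \<and>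
     (\<forall>B\<in>P. \<forall>C\<in>P. B \<noteq> C \<longrightarrow> B \<inter> C = {})"

definition ker_part :: "nat \<Rightarrow> (nat \<Rightarrow> 'b) \<Rightarrow> nat set set" where
  "ker_part k \<alpha> = {{j \<in> {1..k}. \<alpha> j = \<alpha> i} | i. i \<in> {1..k}}"

definition part_le :: "'a set set \<Rightarrow> 'a set set \<Rightarrow> bool" where
  "part_le \<pi> \<sigma> \<longleftrightarrow> (\<forall>B\<in>\<pi>. \<exists>C\<in>\<sigma>. B \<subseteq> C)"

definition pair_partitions :: "nat \<Rightarrow> nat set set set" where
  "pair_partitions k = {\<pi>. is_partition \<pi> {1..k} \<and> (\<forall>B\<in>\<pi>. card B = 2)}"

definition crosses :: "nat set \<Rightarrow> nat set \<Rightarrow> bool" where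
  "crosses V W \<longleftrightarrow> (\<exists>v1 v2 w1 w2. V = {v1, v2} \<and> W = {w1, w2} \<and> v1 < v2 \<and> w1 < w2 \<and>
      ((v1 < w1 \<and> w1 < v2 \<and> v2 < w2) \<or> (w1 < v1 \<and> v1 < w2 \<and> w2 < v2)))"

definition crossing_pairs :: "nat set set \<Rightarrow> nat set set set" where
  "crossing_pairs \<pi> = {{V, W} | V W. V \<in> \<pi> \<and> W \<in> \<pi> \<and> crosses V W}"

definition cr :: "nat set set \<Rightarrow> nat" where
  "cr \<pi> = card (crossing_pairs \<pi>)"

definition blk_val :: "(nat \<Rightarrow> 'b) \<Rightarrow> nat set \<Rightarrow> 'b" where
  "blk_val \<alpha> B = the_elem (\<alpha> ` B)"

end

theory Submission
  imports Defs
begin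

text \<open>
  Every \<open>\<Psi>\<^sub>R\<close> is an involution, and \<open>\<Psi>\<^sub>R \<Psi>\<^sub>S = (-1)^(q + |R \<inter> S|) \<Psi>\<^sub>S \<Psi>\<^sub>R\<close>:
  of the \<open>q\<^sup>2\<close> pairs of Majorana factors exactly the \<open>q\<^sup>2 - |R \<inter> S|\<close> pairs of distinct ones
  anticommute, and the scalar \<open>i^(q div 2)\<close> compensates the sign \<open>(-1)^(q(q-1)/2)\<close> of the square of
  the Majorana product. In a word in involutions that commute up to sign, the first letter can be moved
  to its next occurrence and cancelled at the cost of a sign; hence a word in which every letter occurs
  an even number of times is \<open>\<plusminus>1\<close>. If \<open>ker \<alpha> \<ge> \<pi>\<close> for a pair partition \<open>\<pi>\<close>, cancel the block
  \<open>V = {a, b}\<close> of the least position \<open>a\<close>: a block nested between \<open>a\<close> and \<open>b\<close> is passed twice and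
  contributes nothing, a block \<open>W\<close> crossing \<open>V\<close> is passed once and contributes
  \<open>(-1)^(q + |\<alpha>(V) \<inter> \<alpha>(W)|)\<close>. Induction on the number of blocks gives the sign, and the
  normalized trace of \<open>\<plusminus>1\<close> is \<open>\<plusminus>1\<close>.
\<close>

section \<open>Kronecker products\<close>

lemma sum_lessThan_mult_div_mod:
  fixes f :: "nat \<Rightarrow> nat \<Rightarrow> 'a::comm_monoid_add"
  shows "(\<Sum>l<a * b. f (l div b) (l mod b)) = (\<Sum>x<a. \<Sum>y<b. f x y)"
proof (cases "b = 0")
  case False
  have "(\<Sum>l<a * b. f (l div b) (l mod b)) = (\<Sum>x<a. \<Sum>l\<in>{x * b..<x * b + b}. f (l div b) (l mod b))"
    using sum.nat_group[of "\<lambda>l. f (l div b) (l mod b)" b a] by simp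
  also have "\<dots> = (\<Sum>x<a. \<Sum>y<b. f x y)"
  proof (rule sum.cong[OF refl])
    fix x
    have "(\<Sum>l\<in>{x * b..<x * b + b}. f (l div b) (l mod b)) = (\<Sum>y<b. f ((x * b + y) div b) ((x * b + y) mod b))"
      by (subst sum.atLeastLessThan_shift_0) (simp add: atLeast0LessThan add.commute)
    also have "\<dots> = (\<Sum>y<b. f x y)"
      using False by (intro sum.cong) auto
    finally show "(\<Sum>l\<in>{x * b..<x * b + b}. f (l div b) (l mod b)) = (\<Sum>y<b. f x y)" .
  qed
  finally show ?thesis .
qed simp

lemma div_mod_less_of_less_mult: "i < a * (b::nat) \<Longrightarrow> i div b < a \<and> i mod b < b"
  by (metis less_mult_imp_div_less mod_less_divisor mult_0_right not_gr_zero not_less0)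

lemma dim_row_kron [simp]: "dim_row (kron A B) = dim_row A * dim_row B"
  and dim_col_kron [simp]: "dim_col (kron A B) = dim_col A * dim_col B"
  by (simp_all add: kron_def)

lemma index_kron [simp]:
  "i < dim_row A * dim_row B \<Longrightarrow> j < dim_col A * dim_col B \<Longrightarrow>
   kron A B $$ (i, j) = A $$ (i div dim_row B, j div dim_col B) * B $$ (i mod dim_row B, j mod dim_col B)"
  by (simp add: kron_def)

lemma kron_mult:
  assumes A: "A \<in> carrier_mat ra ca" and B: "B \<in> carrier_mat rb cb"
    and C: "C \<in> carrier_mat ca cc" and D: "D \<in> carrier_mat cb cd"
  shows "kron A B * kron C D = kron (A * C) (B * D)"
proof (rule eq_matI)
  fix i j assume "i < dim_row (kron (A * C) (B * D))" and "j < dim_col (kron (A * C) (B * D))"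
  then have i: "i < ra * rb" and j: "j < cc * cd" using A B C D by auto
  have "(kron A B * kron C D) $$ (i, j) = (\<Sum>l<ca * cb. kron A B $$ (i, l) * kron C D $$ (l, j))"
    using i j A B C D by (simp add: scalar_prod_def atLeast0LessThan)
  also have "\<dots> = (\<Sum>l<ca * cb. (A $$ (i div rb, l div cb) * C $$ (l div cb, j div cd)) *
      (B $$ (i mod rb, l mod cb) * D $$ (l mod cb, j mod cd)))"
    using i j A B C D by (intro sum.cong) (auto simp: less_mult_imp_div_less)
  also have "\<dots> = (\<Sum>x<ca. \<Sum>y<cb. (A $$ (i div rb, x) * C $$ (x, j div cd)) *
      (B $$ (i mod rb, y) * D $$ (y, j mod cd)))"
    by (rule sum_lessThan_mult_div_mod)
  also have "\<dots> = (\<Sum>x<ca. A $$ (i div rb, x) * C $$ (x, j div cd)) *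
      (\<Sum>y<cb. B $$ (i mod rb, y) * D $$ (y, j mod cd))"
    by (simp add: sum_product)
  also have "\<dots> = kron (A * C) (B * D) $$ (i, j)"
    using i j A B C D div_mod_less_of_less_mult[OF i] div_mod_less_of_less_mult[OF j]
    by (simp add: scalar_prod_def atLeast0LessThan)
  finally show "(kron A B * kron C D) $$ (i, j) = kron (A * C) (B * D) $$ (i, j)" .
qed (use A B C D in auto)

lemma kron_smult_left: "kron (c \<cdot>\<^sub>m A) B = c \<cdot>\<^sub>m kron A B"
  and kron_smult_right: "kron A (c \<cdot>\<^sub>m B) = c \<cdot>\<^sub>m kron A B"
  by (rule eq_matI; auto simp: div_mod_less_of_less_mult)+

lemma kron_one_mat: "kron (1\<^sub>m a) (1\<^sub>m b) = 1\<^sub>m (a * b)"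
proof (rule eq_matI)
  fix i j assume "i < dim_row (1\<^sub>m (a * b))" "j < dim_col (1\<^sub>m (a * b))"
  then have ij: "i < a * b" "j < a * b" by auto
  have "(i div b = j div b \<and> i mod b = j mod b) = (i = j)"
    by (metis div_mult_mod_eq)
  then show "kron (1\<^sub>m a) (1\<^sub>m b) $$ (i, j) = 1\<^sub>m (a * b) $$ (i, j)"
    using ij div_mod_less_of_less_mult[OF ij(1)] div_mod_less_of_less_mult[OF ij(2)] by auto
qed auto

lemma one_smult_mat [simp]: "(1::'a::monoid_mult) \<cdot>\<^sub>m A = A"
  by (rule eq_matI) auto

lemma smult_smult_mat [simp]: "(a::'a::semigroup_mult) \<cdot>\<^sub>m (b \<cdot>\<^sub>m A) = (a * b) \<cdot>\<^sub>m A"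
  by (rule eq_matI) (auto simp: mult.assoc)

lemma kron_list_Nil [simp]: "kron_list [] = 1\<^sub>m 1"
  and kron_list_Cons [simp]: "kron_list (M # Ms) = kron M (kron_list Ms)"
  by (simp_all add: kron_list_def)

lemma kron_list_carrier_mat:
  "\<forall>M\<in>set Ms. M \<in> carrier_mat 2 2 \<Longrightarrow> kron_list Ms \<in> carrier_mat (2 ^ length Ms) (2 ^ length Ms)"
  by (induction Ms) auto

lemma kron_list_mult:
  assumes "length Ms = length Ns" "\<forall>M\<in>set Ms. M \<in> carrier_mat 2 2" "\<forall>N\<in>set Ns. N \<in> carrier_mat 2 2"
  shows "kron_list Ms * kron_list Ns = kron_list (map2 (*) Ms Ns)"
  using assms
proof (induction Ms Ns rule: list_induct2)
  case (Cons M Ms N Ns)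
  have "kron M (kron_list Ms) * kron N (kron_list Ns) = kron (M * N) (kron_list Ms * kron_list Ns)"
    using Cons.prems Cons.hyps kron_list_carrier_mat[of Ms] kron_list_carrier_mat[of Ns]
    by (intro kron_mult[of _ 2 2 _ "2 ^ length Ms" "2 ^ length Ms" _ 2 _ "2 ^ length Ms"]) auto
  then show ?case using Cons by simp
qed simp

lemma kron_list_map2_comm:
  assumes "length Ms = length Ns" "\<forall>M\<in>set Ms. M \<in> carrier_mat 2 2" "\<forall>N\<in>set Ns. N \<in> carrier_mat 2 2"
    and "\<forall>t<length Ms. Ms ! t * Ns ! t = c t \<cdot>\<^sub>m (Ns ! t * Ms ! t)"
  shows "kron_list (map2 (*) Ms Ns) = (\<Prod>t<length Ms. c t) \<cdot>\<^sub>m kron_list (map2 (*) Ns Ms)"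
  using assms
proof (induction Ms Ns arbitrary: c rule: list_induct2)
  case (Cons M Ms N Ns)
  have head: "M * N = c 0 \<cdot>\<^sub>m (N * M)" using Cons.prems(3) by force
  have tail: "kron_list (map2 (*) Ms Ns) = (\<Prod>t<length Ms. c (Suc t)) \<cdot>\<^sub>m kron_list (map2 (*) Ns Ms)"
    using Cons.prems by (intro Cons.IH) auto
  have "kron_list (map2 (*) (M # Ms) (N # Ns)) =
      (c 0 * (\<Prod>t<length Ms. c (Suc t))) \<cdot>\<^sub>m kron_list (map2 (*) (N # Ns) (M # Ms))"
    by (simp add: head tail kron_smult_left kron_smult_right mult.commute)
  then show ?case by (simp only: length_Cons prod.lessThan_Suc_shift)
qed simp

lemma kron_list_replicate_one: "kron_list (replicate m (1\<^sub>m 2)) = 1\<^sub>m (2 ^ m)"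
  by (induction m) (simp_all add: kron_one_mat)

section \<open>Pauli matrices and Majorana fermions\<close>

lemma mat22_eqI:
  assumes "A \<in> carrier_mat 2 2" "B \<in> carrier_mat 2 2"
    "A $$ (0,0) = B $$ (0,0)" "A $$ (0,1) = B $$ (0,1)" "A $$ (1,0) = B $$ (1,0)" "A $$ (1,1) = B $$ (1,1)"
  shows "A = B"
proof (rule eq_matI)
  fix i j assume "i < dim_row B" "j < dim_col B"
  then have "i = 0 \<or> i = 1" "j = 0 \<or> j = 1" using assms by auto
  then show "A $$ (i,j) = B $$ (i,j)" using assms by fast
qed (use assms in auto)

lemma index_mult_mat_2:
  "A \<in> carrier_mat 2 2 \<Longrightarrow> B \<in> carrier_mat 2 2 \<Longrightarrow> i < 2 \<Longrightarrow> j < 2 \<Longrightarrow>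
   (A * B) $$ (i,j) = A $$ (i,0) * B $$ (0,j) + A $$ (i,1) * B $$ (1,j)"
  by (simp add: scalar_prod_def numeral_2_eq_2)

lemma pauli_carrier_mat [simp]:
  "sigma1 \<in> carrier_mat 2 2" "sigma2 \<in> carrier_mat 2 2" "sigma3 \<in> carrier_mat 2 2"
  unfolding sigma1_def sigma2_def sigma3_def mat_of_rows_list_def
  by (auto simp only: mat_carrier list.size numeral_2_eq_2 Suc_eq_plus1 add_0)

lemma pauli_entries:
  "sigma1 $$ (0,0) = 0" "sigma1 $$ (0,1) = 1" "sigma1 $$ (1,0) = 1" "sigma1 $$ (1,1) = 0"
  "sigma2 $$ (0,0) = 0" "sigma2 $$ (0,1) = -\<i>" "sigma2 $$ (1,0) = \<i>" "sigma2 $$ (1,1) = 0"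
  "sigma3 $$ (0,0) = 1" "sigma3 $$ (0,1) = 0" "sigma3 $$ (1,0) = 0" "sigma3 $$ (1,1) = -1"
  by (simp_all add: sigma1_def sigma2_def sigma3_def mat_of_rows_list_def)

lemma pauli_square:
  "sigma1 * sigma1 = 1\<^sub>m 2" "sigma2 * sigma2 = 1\<^sub>m 2" "sigma3 * sigma3 = 1\<^sub>m 2"
  by (rule mat22_eqI; simp add: index_mult_mat_2 pauli_entries pauli_entries[unfolded One_nat_def]
      mult_carrier_mat[of _ 2 2 _ 2] del: index_mult_mat)+

lemma pauli_anticomm:
  "sigma1 * sigma2 = (-1) \<cdot>\<^sub>m (sigma2 * sigma1)" "sigma2 * sigma1 = (-1) \<cdot>\<^sub>m (sigma1 * sigma2)"
  "sigma1 * sigma3 = (-1) \<cdot>\<^sub>m (sigma3 * sigma1)" "sigma3 * sigma1 = (-1) \<cdot>\<^sub>m (sigma1 * sigma3)"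
  "sigma2 * sigma3 = (-1) \<cdot>\<^sub>m (sigma3 * sigma2)" "sigma3 * sigma2 = (-1) \<cdot>\<^sub>m (sigma2 * sigma3)"
proof -
  have mult: "A \<in> carrier_mat 2 2 \<Longrightarrow> B \<in> carrier_mat 2 2 \<Longrightarrow> A * B \<in> carrier_mat 2 2"
    for A B :: "complex mat" by auto
  have smult: "A \<in> carrier_mat 2 2 \<Longrightarrow> i < 2 \<Longrightarrow> j < 2 \<Longrightarrow> (c \<cdot>\<^sub>m A) $$ (i,j) = c * A $$ (i,j)"
    for A :: "complex mat" and c i j by auto
  show "sigma1 * sigma2 = (-1) \<cdot>\<^sub>m (sigma2 * sigma1)" "sigma2 * sigma1 = (-1) \<cdot>\<^sub>m (sigma1 * sigma2)"
    "sigma1 * sigma3 = (-1) \<cdot>\<^sub>m (sigma3 * sigma1)" "sigma3 * sigma1 = (-1) \<cdot>\<^sub>m (sigma1 * sigma3)"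
    "sigma2 * sigma3 = (-1) \<cdot>\<^sub>m (sigma3 * sigma2)" "sigma3 * sigma2 = (-1) \<cdot>\<^sub>m (sigma2 * sigma3)"
    by (rule mat22_eqI; simp add: index_mult_mat_2 pauli_entries pauli_entries[unfolded One_nat_def]
        mult smult del: index_mult_mat index_smult_mat)+
qed

lemma sigma1_neq_sigma2: "sigma1 \<noteq> sigma2"
proof
  assume "sigma1 = sigma2"
  then have "(1::complex) = - \<i>" using pauli_entries(2,6) by metis
  then show False by (simp add: complex_eq_iff)
qed

definition jordan_wigner :: "nat \<Rightarrow> nat \<Rightarrow> complex mat \<Rightarrow> complex mat list" where
  "jordan_wigner m p a = replicate p sigma3 @ [a] @ replicate (m - p - 1) (1\<^sub>m 2)"

definition majorana_site :: "nat \<Rightarrow> nat \<Rightarrow> nat" where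
  "majorana_site n j = (if j \<le> n div 2 then j - 1 else j - n div 2 - 1)"

definition majorana_pauli :: "nat \<Rightarrow> nat \<Rightarrow> complex mat" where
  "majorana_pauli n j = (if j \<le> n div 2 then sigma1 else sigma2)"

lemma length_jordan_wigner: "p < m \<Longrightarrow> length (jordan_wigner m p a) = m"
  by (simp add: jordan_wigner_def)

lemma nth_jordan_wigner:
  "p < m \<Longrightarrow> t < m \<Longrightarrow> jordan_wigner m p a ! t = (if t < p then sigma3 else if t = p then a else 1\<^sub>m 2)"
  by (auto simp: jordan_wigner_def nth_append)

lemma jordan_wigner_carrier_mat:
  "a \<in> carrier_mat 2 2 \<Longrightarrow> \<forall>M\<in>set (jordan_wigner m p a). M \<in> carrier_mat 2 2"
  by (auto simp: jordan_wigner_def)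

lemma majorana_site_less: "even n \<Longrightarrow> j \<in> {1..n} \<Longrightarrow> majorana_site n j < n div 2"
  by (auto simp: majorana_site_def)

lemma majorana_pauli_carrier_mat: "majorana_pauli n j \<in> carrier_mat 2 2"
  by (simp add: majorana_pauli_def)

lemma majorana_eq_kron_list_jordan_wigner:
  "even n \<Longrightarrow> j \<in> {1..n} \<Longrightarrow>
   majorana n j = kron_list (jordan_wigner (n div 2) (majorana_site n j) (majorana_pauli n j))"
  unfolding majorana_def jordan_wigner_def majorana_site_def majorana_pauli_def Let_def
  by (auto simp: Suc_diff_Suc)

lemma nth_jordan_wigner_anticomm:
  assumes pm: "p < m" "p' < m" and a: "a \<in> {sigma1, sigma2}" and b: "b \<in> {sigma1, sigma2}"
    and ne: "(p, a) \<noteq> (p', b)" and t: "t < m"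
  shows "jordan_wigner m p a ! t * jordan_wigner m p' b ! t =
    (if t = min p p' then -1 else 1) \<cdot>\<^sub>m (jordan_wigner m p' b ! t * jordan_wigner m p a ! t)"
proof -
  note nth = nth_jordan_wigner[OF pm(1) t, of a] nth_jordan_wigner[OF pm(2) t, of b]
  have carrier: "jordan_wigner m p a ! t \<in> carrier_mat 2 2" "jordan_wigner m p' b ! t \<in> carrier_mat 2 2"
    using nth a b by auto
  consider "t < min p p'" | "t = min p p'" | "t > min p p'" by linarith
  then show ?thesis
  proof cases
    case 1
    then show ?thesis using nth by (auto simp: min_def)
  next
    case 2
    show ?thesis
    proof (cases "p = p'")
      case True
      then have "a * b = (-1) \<cdot>\<^sub>m (b * a)" using a b ne pauli_anticomm by auto
      then show ?thesis using 2 True nth by simp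
    next
      case False
      have "a * sigma3 = (-1) \<cdot>\<^sub>m (sigma3 * a)" "sigma3 * b = (-1) \<cdot>\<^sub>m (b * sigma3)"
        using a b pauli_anticomm by auto
      then show ?thesis using 2 False nth by (cases "p < p'") (auto simp: min_def)
    qed
  next
    case 3
    then have "jordan_wigner m p a ! t = 1\<^sub>m 2 \<or> jordan_wigner m p' b ! t = 1\<^sub>m 2"
      using nth by auto
    then show ?thesis using 3 carrier by auto
  qed
qed

lemma majorana_carrier_mat:
  "even n \<Longrightarrow> j \<in> {1..n} \<Longrightarrow> majorana n j \<in> carrier_mat (2 ^ (n div 2)) (2 ^ (n div 2))"
  using majorana_eq_kron_list_jordan_wigner[of n j]
    kron_list_carrier_mat[OF jordan_wigner_carrier_mat[OF majorana_pauli_carrier_mat]]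
    length_jordan_wigner[OF majorana_site_less]
  by metis

lemma majorana_square:
  assumes "even n" "j \<in> {1..n}"
  shows "majorana n j * majorana n j = 1\<^sub>m (2 ^ (n div 2))"
proof -
  let ?F = "jordan_wigner (n div 2) (majorana_site n j) (majorana_pauli n j)"
  have len: "length ?F = n div 2"
    using length_jordan_wigner[OF majorana_site_less[OF assms]] .
  have "map2 (*) ?F ?F = replicate (n div 2) (1\<^sub>m 2)"
    using nth_jordan_wigner[OF majorana_site_less[OF assms], of _ "majorana_pauli n j"] pauli_square len
    by (intro nth_equalityI) (auto simp: majorana_pauli_def)
  then show ?thesis
    using majorana_eq_kron_list_jordan_wigner[OF assms] kron_list_mult[of ?F ?F]
      jordan_wigner_carrier_mat[OF majorana_pauli_carrier_mat] len kron_list_replicate_one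
    by metis
qed

lemma majorana_anticomm:
  assumes "even n" "j \<in> {1..n}" "l \<in> {1..n}" "j \<noteq> l"
  shows "majorana n j * majorana n l = (-1) \<cdot>\<^sub>m (majorana n l * majorana n j)"
proof -
  let ?F = "jordan_wigner (n div 2) (majorana_site n j) (majorana_pauli n j)"
    and ?G = "jordan_wigner (n div 2) (majorana_site n l) (majorana_pauli n l)"
  let ?s = "min (majorana_site n j) (majorana_site n l)"
  have site: "majorana_site n j < n div 2" "majorana_site n l < n div 2"
    using majorana_site_less assms by auto
  have len: "length ?F = n div 2" "length ?G = n div 2"
    using length_jordan_wigner site by auto
  have ne: "(majorana_site n j, majorana_pauli n j) \<noteq> (majorana_site n l, majorana_pauli n l)"
    using assms sigma1_neq_sigma2
    by (auto simp: majorana_site_def majorana_pauli_def split: if_splits)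
  have pauli: "majorana_pauli n j \<in> {sigma1, sigma2}" "majorana_pauli n l \<in> {sigma1, sigma2}"
    by (auto simp: majorana_pauli_def)
  have "kron_list (map2 (*) ?F ?G) =
      (\<Prod>t<n div 2. if t = ?s then -1 else 1) \<cdot>\<^sub>m kron_list (map2 (*) ?G ?F)"
    using kron_list_map2_comm[of ?F ?G "\<lambda>t. if t = ?s then -1 else 1"] len
      jordan_wigner_carrier_mat[OF majorana_pauli_carrier_mat]
      nth_jordan_wigner_anticomm[OF site pauli ne]
    by simp
  also have "(\<Prod>t<n div 2. if t = ?s then -1 else (1::complex)) = -1"
    using site by (subst prod.delta) auto
  finally show ?thesis
    using majorana_eq_kron_list_jordan_wigner assms kron_list_mult len
      jordan_wigner_carrier_mat[OF majorana_pauli_carrier_mat]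
    by metis
qed


section \<open>Pair partitions and crossings\<close>

lemma finite_partition_blocks: "finite S \<Longrightarrow> is_partition P S \<Longrightarrow> finite P"
  unfolding is_partition_def by (metis finite_UnionD)

lemma is_partition_Diff_block: "is_partition P S \<Longrightarrow> V \<in> P \<Longrightarrow> is_partition (P - {V}) (S - V)"
  unfolding is_partition_def by blast

lemma sum_partition_blocks:
  assumes "finite S" "is_partition P S" "T \<subseteq> S"
  shows "sum g T = (\<Sum>B\<in>P. sum g (B \<inter> T))"
proof -
  have "T = (\<Union>B\<in>P. B \<inter> T)"
    using assms(2,3) unfolding is_partition_def by blast
  also have "sum g \<dots> = (\<Sum>B\<in>P. sum g (B \<inter> T))"
    using assms(1,2) finite_partition_blocks[OF assms(1,2)] unfolding is_partition_def
    by (intro sum.UNION_disjoint) (auto intro: rev_finite_subset)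
  finally show ?thesis .
qed

lemma doubleton_eq_ordered: "(x::'a::linorder) < y \<Longrightarrow> u < v \<Longrightarrow> {x, y} = {u, v} \<longleftrightarrow> x = u \<and> y = v"
  by (auto simp: doubleton_eq_iff)

lemma card_2_ordered: "card W = 2 \<Longrightarrow> \<exists>w1 w2. W = {w1, w2} \<and> w1 < (w2::nat)"
  by (metis card_2_iff insert_commute linorder_neqE_nat)

lemma crosses_ordered:
  assumes "a < b" "w1 < w2"
  shows "crosses {a, b} {w1, w2} \<longleftrightarrow> (a < w1 \<and> w1 < b \<and> b < w2) \<or> (w1 < a \<and> a < w2 \<and> w2 < b)"
proof
  assume "crosses {a, b} {w1, w2}"
  then obtain v1 v2 x1 x2 where h: "{a, b} = {v1, v2}" "{w1, w2} = {x1, x2}" "v1 < v2" "x1 < x2"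
      "(v1 < x1 \<and> x1 < v2 \<and> v2 < x2) \<or> (x1 < v1 \<and> v1 < x2 \<and> x2 < v2)"
    unfolding crosses_def by blast
  then have "v1 = a" "v2 = b" "x1 = w1" "x2 = w2"
    using doubleton_eq_ordered assms by metis+
  then show "(a < w1 \<and> w1 < b \<and> b < w2) \<or> (w1 < a \<and> a < w2 \<and> w2 < b)"
    using h(5) by simp
next
  assume "(a < w1 \<and> w1 < b \<and> b < w2) \<or> (w1 < a \<and> a < w2 \<and> w2 < b)"
  then show "crosses {a, b} {w1, w2}" unfolding crosses_def using assms by blast
qed

lemma crosses_sym: "crosses V W \<Longrightarrow> crosses W V"
  unfolding crosses_def by blast

lemma not_crosses_self: "\<not> crosses V V"
proof
  assume "crosses V V"
  then obtain v1 v2 x1 x2 where h: "V = {v1, v2}" "V = {x1, x2}" "v1 < v2" "x1 < x2"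
      "(v1 < x1 \<and> x1 < v2 \<and> v2 < x2) \<or> (x1 < v1 \<and> v1 < x2 \<and> x2 < v2)"
    unfolding crosses_def by blast
  then have "v1 = x1" "v2 = x2"
    using doubleton_eq_ordered by metis+
  then show False using h(5) by simp
qed

lemma crosses_iff_odd_card_between:
  assumes "a < b" "w1 < w2" "a < w1" "b \<notin> {w1, w2}"
  shows "crosses {a, b} {w1, w2} \<longleftrightarrow> odd (card ({w1, w2} \<inter> {a<..<b}))"
proof -
  have crosses: "crosses {a, b} {w1, w2} \<longleftrightarrow> w1 < b \<and> b < w2"
    using crosses_ordered[OF assms(1,2)] assms(3) by auto
  have "b \<noteq> w1" "b \<noteq> w2" using assms(4) by auto
  then consider "w2 < b" | "w1 < b" "b < w2" | "b < w1"
    using assms(2) by linarith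
  then show ?thesis
  proof cases
    case 1
    then have "{w1, w2} \<inter> {a<..<b} = {w1, w2}" using assms by auto
    then show ?thesis using crosses 1 assms(2) by auto
  next
    case 2
    then have "{w1, w2} \<inter> {a<..<b} = {w1}" using assms by auto
    then show ?thesis using crosses 2 by auto
  next
    case 3
    then have "{w1, w2} \<inter> {a<..<b} = {}" using assms by auto
    then show ?thesis using crosses 3 by auto
  qed
qed

lemma finite_crossing_pairs: "finite P \<Longrightarrow> finite (crossing_pairs P)"
  by (rule finite_subset[of _ "Pow P"]) (auto simp: crossing_pairs_def)

lemma crossing_pairs_Diff_block:
  assumes "V \<in> P"
  shows "crossing_pairs P = crossing_pairs (P - {V}) \<union> (\<lambda>W. {V, W}) ` {W\<in>P. crosses V W}"
    and "crossing_pairs (P - {V}) \<inter> (\<lambda>W. {V, W}) ` {W\<in>P. crosses V W} = {}"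
proof -
  show "crossing_pairs P = crossing_pairs (P - {V}) \<union> (\<lambda>W. {V, W}) ` {W\<in>P. crosses V W}"
  proof (intro equalityI subsetI)
    fix p assume "p \<in> crossing_pairs P"
    then obtain V' W' where p: "p = {V', W'}" "V' \<in> P" "W' \<in> P" "crosses V' W'"
      unfolding crossing_pairs_def by blast
    show "p \<in> crossing_pairs (P - {V}) \<union> (\<lambda>W. {V, W}) ` {W\<in>P. crosses V W}"
    proof (cases "V' = V \<or> W' = V")
      case True
      then have "p = {V, W'} \<and> crosses V W' \<or> p = {V, V'} \<and> crosses V V'"
        using p crosses_sym by (auto simp: insert_commute)
      then show ?thesis using p by blast
    next
      case False
      then show ?thesis using p unfolding crossing_pairs_def by blast
    qed
  next
    fix p assume "p \<in> crossing_pairs (P - {V}) \<union> (\<lambda>W. {V, W}) ` {W\<in>P. crosses V W}"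
    then show "p \<in> crossing_pairs P" using assms unfolding crossing_pairs_def by blast
  qed
  show "crossing_pairs (P - {V}) \<inter> (\<lambda>W. {V, W}) ` {W\<in>P. crosses V W} = {}"
    unfolding crossing_pairs_def by blast
qed

lemma sum_crossing_pairs_Diff_block:
  assumes "V \<in> P" "finite P"
  shows "(\<Sum>p\<in>crossing_pairs P. h p) =
    (\<Sum>p\<in>crossing_pairs (P - {V}). h p) + (\<Sum>W\<in>{W\<in>P. crosses V W}. h {V, W})"
proof -
  have inj: "inj_on (\<lambda>W. {V, W}) {W\<in>P. crosses V W}"
    by (rule inj_onI) (auto simp: doubleton_eq_iff)
  have fin: "finite (crossing_pairs (P - {V}))" "finite ((\<lambda>W. {V, W}) ` {W\<in>P. crosses V W})"
    using assms finite_crossing_pairs by auto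
  show ?thesis
    unfolding crossing_pairs_Diff_block(1)[OF assms(1)]
    using sum.union_disjoint[OF fin crossing_pairs_Diff_block(2)[OF assms(1)], of h] sum.reindex[OF inj, of h]
    by (simp add: comp_def)
qed

lemma even_sum_between_plus_crossing:
  fixes g :: "nat \<Rightarrow> nat" and f :: "nat set \<Rightarrow> nat"
  assumes S: "finite S" "is_partition P S" "\<forall>B\<in>P. card B = 2"
    and V: "V \<in> P" "V = {a, b}" "a < b" and a_min: "\<forall>x\<in>S. a \<le> x"
    and g_f: "\<forall>W\<in>P. \<forall>l\<in>W. g l = f W"
  shows "even ((\<Sum>l\<in>{x\<in>S. a < x \<and> x < b}. g l) + (\<Sum>W\<in>{W\<in>P. crosses V W}. f W))"
proof -
  define T where "T = {x\<in>S. a < x \<and> x < b}"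
  have fin: "finite (P - {V})" using finite_partition_blocks[OF S(1,2)] by simp
  have "T \<subseteq> S - V" using V by (auto simp: T_def)
  then have "sum g T = (\<Sum>W\<in>P - {V}. sum g (W \<inter> T))"
    using sum_partition_blocks[OF _ is_partition_Diff_block[OF S(2) V(1)]] S(1) by blast
  also have "\<dots> = (\<Sum>W\<in>P - {V}. card (W \<inter> T) * f W)"
  proof (rule sum.cong[OF refl])
    fix W assume "W \<in> P - {V}"
    then have "sum g (W \<inter> T) = (\<Sum>l\<in>W \<inter> T. f W)" using g_f by (intro sum.cong) auto
    then show "sum g (W \<inter> T) = card (W \<inter> T) * f W" by simp
  qed
  finally have between: "sum g T = (\<Sum>W\<in>P - {V}. card (W \<inter> T) * f W)" .
  have "{W\<in>P - {V}. crosses V W} = {W\<in>P. crosses V W}"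
    using not_crosses_self by auto
  then have crossing: "(\<Sum>W\<in>{W\<in>P. crosses V W}. f W) = (\<Sum>W\<in>P - {V}. if crosses V W then f W else 0)"
    using sum.inter_filter[OF fin, of f "crosses V"] by simp
  have "even (card (W \<inter> T) * f W + (if crosses V W then f W else 0))" if W: "W \<in> P - {V}" for W
  proof -
    obtain w1 w2 where w: "W = {w1, w2}" "w1 < w2"
      using card_2_ordered S(3) W by blast
    have "W \<subseteq> S" "W \<inter> V = {}"
      using S(2) V(1) W unfolding is_partition_def by auto
    then have "w1 \<in> S" "a \<notin> W" "b \<notin> W" using w V(2) by auto
    then have "a < w1" using a_min w(1) by force
    have "W \<inter> T = {w1, w2} \<inter> {a<..<b}" using \<open>W \<subseteq> S\<close> w(1) by (auto simp: T_def)
    with \<open>a < w1\<close> \<open>b \<notin> W\<close> w(1)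
    have "crosses V W \<longleftrightarrow> odd (card (W \<inter> T))"
      using crosses_iff_odd_card_between[OF V(3) w(2)] V(2) by simp
    then show ?thesis by auto
  qed
  then have "even (\<Sum>W\<in>P - {V}. card (W \<inter> T) * f W + (if crosses V W then f W else 0))"
    by (intro dvd_sum) auto
  then show ?thesis
    using between crossing by (simp add: sum.distrib T_def)
qed

lemma neg_one_power_eq_of_even_add: "even (a + b) \<Longrightarrow> (-1::'a::ring_1) ^ a = (-1) ^ b"
  by (cases "even a") (auto simp: even_add)

section \<open>Words in involutions commuting up to sign\<close>

locale sign_commuting_involutions =
  fixes N :: nat and G :: "'a \<Rightarrow> complex mat" and D :: "'a set" and e :: "'a \<Rightarrow> 'a \<Rightarrow> nat"
  assumes G_carrier_mat: "x \<in> D \<Longrightarrow> G x \<in> carrier_mat N N"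
    and G_square: "x \<in> D \<Longrightarrow> G x * G x = 1\<^sub>m N"
    and G_comm: "x \<in> D \<Longrightarrow> y \<in> D \<Longrightarrow> G x * G y = (-1) ^ e x y \<cdot>\<^sub>m (G y * G x)"
begin

definition word_prod :: "'a list \<Rightarrow> complex mat" where
  "word_prod w = mat_prod_list N (map G w)"

lemma word_prod_Nil [simp]: "word_prod [] = 1\<^sub>m N"
  and word_prod_Cons: "word_prod (x # w) = G x * word_prod w"
  by (simp_all add: word_prod_def mat_prod_list_def)

lemma word_prod_carrier_mat: "set w \<subseteq> D \<Longrightarrow> word_prod w \<in> carrier_mat N N"
  by (induction w) (auto simp: word_prod_Cons intro!: mult_carrier_mat G_carrier_mat)

lemma word_prod_append:
  "set u \<subseteq> D \<Longrightarrow> set v \<subseteq> D \<Longrightarrow> word_prod (u @ v) = word_prod u * word_prod v"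
proof (induction u)
  case Nil
  then show ?case using word_prod_carrier_mat[of v] by simp
next
  case (Cons x u)
  then show ?case
    using word_prod_carrier_mat[of u] word_prod_carrier_mat[of v] G_carrier_mat[of x]
    by (simp add: word_prod_Cons assoc_mult_mat[of _ N N _ N _ N])
qed

lemma G_word_prod_comm:
  "x \<in> D \<Longrightarrow> set w \<subseteq> D \<Longrightarrow> G x * word_prod w = (-1) ^ (\<Sum>y\<leftarrow>w. e x y) \<cdot>\<^sub>m (word_prod w * G x)"
proof (induction w)
  case Nil
  then show ?case using G_carrier_mat[of x] by simp
next
  case (Cons y w)
  have c: "G x \<in> carrier_mat N N" "G y \<in> carrier_mat N N" "word_prod w \<in> carrier_mat N N"
    using Cons.prems G_carrier_mat word_prod_carrier_mat by auto
  have "G x * word_prod (y # w) = (G x * G y) * word_prod w"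
    using c by (simp add: word_prod_Cons)
  also have "\<dots> = ((-1) ^ e x y \<cdot>\<^sub>m (G y * G x)) * word_prod w"
    using G_comm[of x y] Cons.prems by simp
  also have "\<dots> = (-1) ^ e x y \<cdot>\<^sub>m (G y * (G x * word_prod w))"
    using c by (simp add: mult_smult_assoc_mat[of _ N N _ N])
  also have "\<dots> = (-1) ^ e x y \<cdot>\<^sub>m (G y * ((-1) ^ (\<Sum>y\<leftarrow>w. e x y) \<cdot>\<^sub>m (word_prod w * G x)))"
    using Cons by simp
  also have "\<dots> = (-1) ^ (\<Sum>y\<leftarrow>y # w. e x y) \<cdot>\<^sub>m (word_prod (y # w) * G x)"
    using c by (simp add: mult_smult_distrib[of _ N N _ N] word_prod_Cons power_add)
  finally show ?case .
qed

lemma word_prod_comm: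
  assumes "set u \<subseteq> D" "set w \<subseteq> D"
  shows "word_prod u * word_prod w = (-1) ^ (\<Sum>x\<leftarrow>u. \<Sum>y\<leftarrow>w. e x y) \<cdot>\<^sub>m (word_prod w * word_prod u)"
  using assms
proof (induction u)
  case Nil
  then show ?case using word_prod_carrier_mat[of w] by simp
next
  case (Cons x u)
  have c: "G x \<in> carrier_mat N N" "word_prod w \<in> carrier_mat N N" "word_prod u \<in> carrier_mat N N"
    using Cons.prems G_carrier_mat word_prod_carrier_mat by auto
  define s where "s = (-1::complex) ^ (\<Sum>x\<leftarrow>u. \<Sum>y\<leftarrow>w. e x y)"
  define t where "t = (-1::complex) ^ (\<Sum>y\<leftarrow>w. e x y)"
  have "word_prod (x # u) * word_prod w = G x * (word_prod u * word_prod w)"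
    using c by (simp add: word_prod_Cons)
  also have "\<dots> = G x * (s \<cdot>\<^sub>m (word_prod w * word_prod u))"
    using Cons by (simp add: s_def)
  also have "\<dots> = s \<cdot>\<^sub>m ((G x * word_prod w) * word_prod u)"
    using c by (simp add: mult_smult_distrib[of _ N N _ N] assoc_mult_mat[of _ N N _ N _ N])
  also have "G x * word_prod w = t \<cdot>\<^sub>m (word_prod w * G x)"
    using G_word_prod_comm Cons.prems by (simp add: t_def)
  also have "(t \<cdot>\<^sub>m (word_prod w * G x)) * word_prod u = t \<cdot>\<^sub>m (word_prod w * (G x * word_prod u))"
    using c by (simp add: mult_smult_assoc_mat[of _ N N _ N])
  also have "s \<cdot>\<^sub>m (t \<cdot>\<^sub>m (word_prod w * (G x * word_prod u))) =
      (-1) ^ (\<Sum>x\<leftarrow>x # u. \<Sum>y\<leftarrow>w. e x y) \<cdot>\<^sub>m (word_prod w * word_prod (x # u))"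
    by (simp add: s_def t_def word_prod_Cons power_add mult.commute)
  finally show ?case .
qed

lemma word_prod_cancel_pair:
  assumes "x \<in> D" "set u \<subseteq> D" "set v \<subseteq> D"
  shows "word_prod (x # u @ x # v) = (-1) ^ (\<Sum>y\<leftarrow>u. e x y) \<cdot>\<^sub>m word_prod (u @ v)"
proof -
  have c: "G x \<in> carrier_mat N N" "word_prod u \<in> carrier_mat N N" "word_prod v \<in> carrier_mat N N"
    using assms G_carrier_mat word_prod_carrier_mat by auto
  have "word_prod (x # u @ x # v) = (G x * word_prod u) * (G x * word_prod v)"
    using assms c by (simp add: word_prod_Cons word_prod_append assoc_mult_mat[of _ N N _ N _ N])
  also have "\<dots> = (-1) ^ (\<Sum>y\<leftarrow>u. e x y) \<cdot>\<^sub>m ((word_prod u * G x) * (G x * word_prod v))"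
    using G_word_prod_comm assms c by (simp add: mult_smult_assoc_mat[of _ N N _ N])
  also have "(word_prod u * G x) * (G x * word_prod v) = word_prod u * ((G x * G x) * word_prod v)"
    using c by (simp add: assoc_mult_mat[of _ N N _ N _ N])
  also have "\<dots> = word_prod (u @ v)"
    using c assms G_square by (simp add: word_prod_append)
  finally show ?thesis .
qed

lemma word_prod_Cons_square:
  assumes "x \<in> D" "set w \<subseteq> D"
  shows "word_prod (x # w) * word_prod (x # w) = (-1) ^ (\<Sum>y\<leftarrow>w. e x y) \<cdot>\<^sub>m (word_prod w * word_prod w)"
proof -
  have "word_prod (x # w) * word_prod (x # w) = word_prod (x # w @ x # w)"
    using assms word_prod_append[of "x # w" "x # w"] by simp
  also have "\<dots> = (-1) ^ (\<Sum>y\<leftarrow>w. e x y) \<cdot>\<^sub>m word_prod (w @ w)"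
    by (rule word_prod_cancel_pair[OF assms assms(2)])
  finally show ?thesis using assms by (simp add: word_prod_append)
qed

lemma word_prod_even_counts:
  assumes "set w \<subseteq> D" "\<forall>x. even (count_list w x)"
  shows "\<exists>k. word_prod w = (-1::complex) ^ k \<cdot>\<^sub>m 1\<^sub>m N"
  using assms
proof (induction "length w" arbitrary: w rule: less_induct)
  case less
  show ?case
  proof (cases w)
    case Nil
    then show ?thesis by (intro exI[of _ 0]) simp
  next
    case (Cons x w')
    have "odd (count_list w' x)" using less.prems(2)[rule_format, of x] Cons by simp
    then have "x \<in> set w'" by (metis count_notin even_zero)
    then obtain u v where uv: "w' = u @ x # v" "x \<notin> set u" by (meson split_list_first)
    have D: "x \<in> D" "set u \<subseteq> D" "set v \<subseteq> D" using less.prems(1) Cons uv by auto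
    have "\<forall>y. even (count_list (u @ v) y)"
    proof
      fix y
      have "even (count_list w y)" using less.prems(2) by simp
      then show "even (count_list (u @ v) y)" using Cons uv by (cases "y = x") auto
    qed
    moreover have "length (u @ v) < length w" using Cons uv by simp
    ultimately obtain k where k: "word_prod (u @ v) = (-1::complex) ^ k \<cdot>\<^sub>m 1\<^sub>m N"
      using less.hyps[of "u @ v"] D by auto
    have "word_prod w = (-1) ^ (\<Sum>y\<leftarrow>u. e x y) \<cdot>\<^sub>m word_prod (u @ v)"
      using Cons uv word_prod_cancel_pair D by simp
    then have "word_prod w = (-1::complex) ^ ((\<Sum>y\<leftarrow>u. e x y) + k) \<cdot>\<^sub>m 1\<^sub>m N"
      using k by (simp add: power_add)
    then show ?thesis by blast
  qed
qed

lemma word_prod_drop_first_pair: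
  fixes \<alpha> :: "'b::linorder \<Rightarrow> 'a"
  assumes S: "finite S" "\<alpha> ` S \<subseteq> D"
    and ab: "a \<in> S" "b \<in> S" "a < b" "\<forall>x\<in>S. a \<le> x" "\<alpha> b = \<alpha> a"
  shows "word_prod (map \<alpha> (sorted_list_of_set S)) =
    (-1) ^ (\<Sum>l\<in>{x\<in>S. a < x \<and> x < b}. e (\<alpha> a) (\<alpha> l)) \<cdot>\<^sub>m word_prod (map \<alpha> (sorted_list_of_set (S - {a, b})))"
proof -
  define T where "T = {x\<in>S. a < x \<and> x < b}"
  define U where "U = {x\<in>S. b < x}"
  have fin: "finite T" "finite U" using S(1) by (auto simp: T_def U_def)
  have sorted_S: "sorted_list_of_set S = a # sorted_list_of_set T @ b # sorted_list_of_set U"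
    using fin ab S(1) by (intro sorted_distinct_set_unique) (auto simp: sorted_append T_def U_def)
  have sorted_S': "sorted_list_of_set (S - {a, b}) = sorted_list_of_set T @ sorted_list_of_set U"
    using fin ab S(1) by (intro sorted_distinct_set_unique) (auto simp: sorted_append T_def U_def)
  have D: "\<alpha> a \<in> D" "set (map \<alpha> (sorted_list_of_set T)) \<subseteq> D" "set (map \<alpha> (sorted_list_of_set U)) \<subseteq> D"
    using S ab(1) fin by (auto simp: T_def U_def)
  have "word_prod (map \<alpha> (sorted_list_of_set S)) =
      word_prod (\<alpha> a # map \<alpha> (sorted_list_of_set T) @ \<alpha> a # map \<alpha> (sorted_list_of_set U))"
    by (simp add: sorted_S ab(5))
  also have "\<dots> = (-1) ^ (\<Sum>y\<leftarrow>map \<alpha> (sorted_list_of_set T). e (\<alpha> a) y) \<cdot>\<^sub>m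
      word_prod (map \<alpha> (sorted_list_of_set (S - {a, b})))"
    by (simp add: word_prod_cancel_pair[OF D] sorted_S')
  also have "(\<Sum>y\<leftarrow>map \<alpha> (sorted_list_of_set T). e (\<alpha> a) y) = (\<Sum>l\<in>T. e (\<alpha> a) (\<alpha> l))"
    using fin by (simp add: sum_list_distinct_conv_sum_set comp_def)
  finally show ?thesis by (simp add: T_def)
qed

lemma word_prod_pair_partition:
  fixes \<alpha> :: "nat \<Rightarrow> 'a" and h :: "nat set set \<Rightarrow> nat"
  assumes "finite S" "\<alpha> ` S \<subseteq> D" "is_partition P S" "\<forall>B\<in>P. card B = 2"
    and "\<forall>B\<in>P. \<forall>x\<in>B. \<forall>y\<in>B. \<alpha> x = \<alpha> y"
    and "\<forall>V\<in>P. \<forall>W\<in>P. V \<noteq> W \<longrightarrow> h {V, W} = e (blk_val \<alpha> V) (blk_val \<alpha> W)"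
  shows "word_prod (map \<alpha> (sorted_list_of_set S)) = (-1) ^ (\<Sum>p\<in>crossing_pairs P. h p) \<cdot>\<^sub>m 1\<^sub>m N"
  using assms
proof (induction "card S" arbitrary: S P rule: less_induct)
  case less
  note part = \<open>is_partition P S\<close>[unfolded is_partition_def]
  show ?case
  proof (cases "S = {}")
    case True
    then have "P = {}" using part by auto
    then show ?thesis using True by (simp add: crossing_pairs_def)
  next
    case False
    define a where "a = Min S"
    have a: "a \<in> S" "\<forall>x\<in>S. a \<le> x" using False less.prems(1) by (auto simp: a_def)
    obtain V where V: "V \<in> P" "a \<in> V" using a(1) part by auto
    obtain w1 b where w: "V = {w1, b}" "w1 < b" using card_2_ordered less.prems(4) V(1) by blast
    have "w1 \<in> S" "b \<in> S" using w V(1) part by auto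
    then have "a \<le> w1" using a(2) by blast
    then have "a = w1" using V(2) w by auto
    then have Vb: "V = {a, b}" "a < b" using w by auto
    define X where "X = \<alpha> a"
    have "\<alpha> b = X" using less.prems(5) V Vb by (auto simp: X_def)
    then have blk_V: "blk_val \<alpha> V = X" by (simp add: blk_val_def Vb X_def)
    have blk_W: "\<forall>W\<in>P. \<forall>l\<in>W. e X (\<alpha> l) = e X (blk_val \<alpha> W)"
    proof (intro ballI)
      fix W l assume "W \<in> P" "l \<in> W"
      then have "\<alpha> ` W = {\<alpha> l}" using less.prems(5) by blast
      then show "e X (\<alpha> l) = e X (blk_val \<alpha> W)" by (simp add: blk_val_def)
    qed
    define E where "E = (\<Sum>l\<in>{x\<in>S. a < x \<and> x < b}. e X (\<alpha> l))"
    define C where "C = (\<Sum>p\<in>crossing_pairs (P - {V}). h p)"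
    have drop: "word_prod (map \<alpha> (sorted_list_of_set S)) =
        (-1) ^ E \<cdot>\<^sub>m word_prod (map \<alpha> (sorted_list_of_set (S - V)))"
      using word_prod_drop_first_pair[OF less.prems(1,2) a(1) \<open>b \<in> S\<close> Vb(2) a(2)] \<open>\<alpha> b = X\<close>
      by (simp add: E_def X_def Vb(1))
    have "card (S - V) < card S"
      using less.prems(1) a(1) V(2) by (intro psubset_card_mono) auto
    then have IH: "word_prod (map \<alpha> (sorted_list_of_set (S - V))) = (-1) ^ C \<cdot>\<^sub>m 1\<^sub>m N"
      unfolding C_def
    proof (rule less.hyps[OF _ _ _ is_partition_Diff_block[OF less.prems(3) V(1)]])
      show "finite (S - V)" "\<alpha> ` (S - V) \<subseteq> D" "\<forall>B\<in>P - {V}. card B = 2"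
        using less.prems(1,2,4) by auto
      show "\<forall>B\<in>P - {V}. \<forall>x\<in>B. \<forall>y\<in>B. \<alpha> x = \<alpha> y"
        using less.prems(5) by blast
      show "\<forall>V'\<in>P - {V}. \<forall>W\<in>P - {V}. V' \<noteq> W \<longrightarrow> h {V', W} = e (blk_val \<alpha> V') (blk_val \<alpha> W)"
        using less.prems(6) by blast
    qed
    have "even (E + (\<Sum>W\<in>{W\<in>P. crosses V W}. e X (blk_val \<alpha> W)))"
      using even_sum_between_plus_crossing[OF less.prems(1,3,4) V(1) Vb a(2) blk_W] by (simp add: E_def)
    moreover have "(\<Sum>W\<in>{W\<in>P. crosses V W}. h {V, W}) = (\<Sum>W\<in>{W\<in>P. crosses V W}. e X (blk_val \<alpha> W))"
    proof (rule sum.cong[OF refl])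
      fix W assume W: "W \<in> {W\<in>P. crosses V W}"
      then have "W \<noteq> V" using not_crosses_self by auto
      then show "h {V, W} = e X (blk_val \<alpha> W)" using less.prems(6) V(1) W blk_V by auto
    qed
    moreover have "(\<Sum>p\<in>crossing_pairs P. h p) = C + (\<Sum>W\<in>{W\<in>P. crosses V W}. h {V, W})"
      unfolding C_def by (rule sum_crossing_pairs_Diff_block[OF V(1) finite_partition_blocks[OF less.prems(1,3)]])
    ultimately have "(-1::complex) ^ (E + C) = (-1) ^ (\<Sum>p\<in>crossing_pairs P. h p)"
      by (intro neg_one_power_eq_of_even_add) presburger
    then show ?thesis using drop IH by (simp add: power_add)
  qed
qed

end

section \<open>The matrices Psi_R\<close>

lemma sign_commuting_involutions_majorana:
  assumes "even n"
  shows "sign_commuting_involutions (2 ^ (n div 2)) (majorana n) {1..n} (\<lambda>j l. if j = l then 0 else 1)"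
proof
  fix j l assume jl: "j \<in> {1..n}" "l \<in> {1..n}"
  show "majorana n j * majorana n l =
      (-1) ^ (if j = l then 0 else 1) \<cdot>\<^sub>m (majorana n l * majorana n j)"
  proof (cases "j = l")
    case False
    then show ?thesis using majorana_anticomm[OF assms jl False] by simp
  qed simp
qed (use majorana_carrier_mat majorana_square assms in auto)

definition majorana_word :: "nat \<Rightarrow> nat list \<Rightarrow> complex mat" where
  "majorana_word n w = mat_prod_list (2 ^ (n div 2)) (map (majorana n) w)"

lemma majorana_word_eq_word_prod:
  assumes "even n"
  shows "majorana_word n w = sign_commuting_involutions.word_prod (2 ^ (n div 2)) (majorana n) w"
proof -
  interpret M: sign_commuting_involutions "2 ^ (n div 2)" "majorana n" "{1..n}" "\<lambda>j l. if j = l then 0 else 1"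
    by (rule sign_commuting_involutions_majorana[OF assms])
  show ?thesis by (simp add: majorana_word_def M.word_prod_def)
qed

lemma majorana_word_carrier_mat:
  "even n \<Longrightarrow> set w \<subseteq> {1..n} \<Longrightarrow> majorana_word n w \<in> carrier_mat (2 ^ (n div 2)) (2 ^ (n div 2))"
  using sign_commuting_involutions.word_prod_carrier_mat[OF sign_commuting_involutions_majorana]
  by (simp add: majorana_word_eq_word_prod)

lemma majorana_word_square:
  assumes "even n" "distinct w" "set w \<subseteq> {1..n}"
  shows "majorana_word n w * majorana_word n w = (-1) ^ (\<Sum>t<length w. t) \<cdot>\<^sub>m 1\<^sub>m (2 ^ (n div 2))"
proof -
  interpret M: sign_commuting_involutions "2 ^ (n div 2)" "majorana n" "{1..n}" "\<lambda>j l. if j = l then 0 else 1"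
    by (rule sign_commuting_involutions_majorana[OF assms(1)])
  show ?thesis
    using assms(2,3)
  proof (induction w)
    case (Cons x w)
    have "(\<Sum>y\<leftarrow>w. if x = y then 0 else 1::nat) = length w"
      using Cons.prems(1) by (induction w) auto
    then have "majorana_word n (x # w) * majorana_word n (x # w) =
        (-1) ^ length w \<cdot>\<^sub>m (majorana_word n w * majorana_word n w)"
      using M.word_prod_Cons_square[of x w] Cons.prems by (simp add: majorana_word_eq_word_prod[OF assms(1)])
    then show ?case
      using Cons by (simp add: power_add lessThan_Suc)
  qed (simp add: majorana_word_eq_word_prod[OF assms(1)])
qed

lemma sum_neq_indicator_plus_card_Int:
  assumes "finite R" "finite S"
  shows "(\<Sum>x\<in>R. \<Sum>y\<in>S. if x = y then 0 else 1::nat) + card (R \<inter> S) = card R * card S"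
proof -
  have "(\<Sum>y\<in>S. if x = y then 0 else 1::nat) + (if x \<in> S then 1 else 0) = card S" for x
  proof -
    have "(\<Sum>y\<in>S. if x = y then 0 else 1::nat) = card (S - {x})"
      using assms(2) by (simp add: sum.If_cases Diff_eq)
    moreover have "card S > 0" if "x \<in> S"
      using assms(2) that card_gt_0_iff by blast
    ultimately show ?thesis
      using assms(2) by (cases "x \<in> S") (auto simp: card_Diff_singleton)
  qed
  moreover have "card (R \<inter> S) = (\<Sum>x\<in>R. if x \<in> S then 1 else 0)"
    using assms(1) by (simp add: sum.If_cases Int_def)
  ultimately show ?thesis
    by (simp add: sum.distrib[symmetric])
qed

text \<open>The exponent should be \<open>card R * card S - card (R \<inter> S)\<close>, the number of pairs of distinct
  indices; adding \<open>card (R \<inter> S)\<close> instead gives the same parity and avoids truncated subtraction.\<close>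

lemma majorana_word_sorted_comm:
  assumes "even n" "finite R" "finite S" "R \<subseteq> {1..n}" "S \<subseteq> {1..n}"
  shows "majorana_word n (sorted_list_of_set R) * majorana_word n (sorted_list_of_set S) =
    (-1) ^ (card R * card S + card (R \<inter> S)) \<cdot>\<^sub>m
    (majorana_word n (sorted_list_of_set S) * majorana_word n (sorted_list_of_set R))"
proof -
  interpret M: sign_commuting_involutions "2 ^ (n div 2)" "majorana n" "{1..n}" "\<lambda>j l. if j = l then 0 else 1"
    by (rule sign_commuting_involutions_majorana[OF assms(1)])
  define E where "E = (\<Sum>x\<in>R. \<Sum>y\<in>S. if x = y then 0 else 1::nat)"
  have "even (E + (card R * card S + card (R \<inter> S)))"
    using sum_neq_indicator_plus_card_Int[OF assms(2,3)] unfolding E_def[symmetric] by presburger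
  then have "(-1::complex) ^ E = (-1) ^ (card R * card S + card (R \<inter> S))"
    by (rule neg_one_power_eq_of_even_add)
  moreover have "(\<Sum>x\<leftarrow>sorted_list_of_set R. \<Sum>y\<leftarrow>sorted_list_of_set S. if x = y then 0 else 1::nat) = E"
    using assms(2,3) by (simp add: E_def sum_list_distinct_conv_sum_set)
  ultimately show ?thesis
    using M.word_prod_comm[of "sorted_list_of_set R" "sorted_list_of_set S"] assms
    by (simp add: majorana_word_eq_word_prod[OF assms(1)])
qed

lemma index_tuplesD: "R \<in> index_tuples n q \<Longrightarrow> finite R \<and> R \<subseteq> {1..n} \<and> card R = q"
  unfolding index_tuples_def using finite_subset by auto

lemma Psi_eq_majorana_word: "Psi n q R = \<i> ^ (q div 2) \<cdot>\<^sub>m majorana_word n (sorted_list_of_set R)"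
  by (simp add: Psi_def majorana_word_def)

lemma Psi_carrier_mat:
  "even n \<Longrightarrow> R \<in> index_tuples n q \<Longrightarrow> Psi n q R \<in> carrier_mat (2 ^ (n div 2)) (2 ^ (n div 2))"
  using majorana_word_carrier_mat index_tuplesD by (simp add: Psi_eq_majorana_word)

lemma even_div_2_plus_sum_lessThan: "even ((q::nat) div 2 + (\<Sum>t<q. t))"
proof (induction q rule: less_induct)
  case (less q)
  show ?case
  proof (cases "q < 4")
    case True
    then have "q = 0 \<or> q = 1 \<or> q = 2 \<or> q = 3" by auto
    moreover have "(\<Sum>t<(2::nat). t) = 1" "(\<Sum>t<(3::nat). t) = 3"
      by (simp_all add: eval_nat_numeral)
    ultimately show ?thesis by auto
  next
    case False
    then obtain r where r: "q = r + 4" by (metis add.commute le_Suc_ex not_less)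
    have "(\<Sum>t<q. t) = (\<Sum>t<r. t) + (4 * r + 6)"
      unfolding r by (simp add: numeral_eq_Suc lessThan_Suc)
    moreover have "q div 2 = r div 2 + 2" unfolding r by simp
    ultimately show ?thesis using less.IH[of r] r by simp
  qed
qed

lemma Psi_square:
  assumes "even n" "R \<in> index_tuples n q"
  shows "Psi n q R * Psi n q R = 1\<^sub>m (2 ^ (n div 2))"
proof -
  let ?N = "2 ^ (n div 2)" and ?A = "majorana_word n (sorted_list_of_set R)"
  have R: "finite R" "R \<subseteq> {1..n}" "card R = q" using index_tuplesD[OF assms(2)] by auto
  have A: "?A \<in> carrier_mat ?N ?N" using majorana_word_carrier_mat[OF assms(1)] R by simp
  have "Psi n q R * Psi n q R = (\<i> ^ (q div 2) * \<i> ^ (q div 2)) \<cdot>\<^sub>m (?A * ?A)"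
    using A by (simp add: Psi_eq_majorana_word mult_smult_assoc_mat[of _ ?N ?N _ ?N]
        mult_smult_distrib[of _ ?N ?N _ ?N])
  also have "\<i> ^ (q div 2) * \<i> ^ (q div 2) = (-1::complex) ^ (q div 2)"
    by (metis power2_i power_add power_mult mult_2 power_mult_distrib)
  also have "?A * ?A = (-1) ^ (\<Sum>t<q. t) \<cdot>\<^sub>m 1\<^sub>m ?N"
    using majorana_word_square[OF assms(1), of "sorted_list_of_set R"] R by simp
  finally show ?thesis
    using even_div_2_plus_sum_lessThan[of q] by (simp add: power_add[symmetric])
qed

lemma Psi_comm:
  assumes "even n" "R \<in> index_tuples n q" "S \<in> index_tuples n q"
  shows "Psi n q R * Psi n q S = (-1) ^ (q + card (R \<inter> S)) \<cdot>\<^sub>m (Psi n q S * Psi n q R)"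
proof -
  let ?N = "2 ^ (n div 2)" and ?c = "\<i> ^ (q div 2) :: complex"
  let ?A = "majorana_word n (sorted_list_of_set R)" and ?B = "majorana_word n (sorted_list_of_set S)"
  have R: "finite R" "R \<subseteq> {1..n}" "card R = q" and S: "finite S" "S \<subseteq> {1..n}" "card S = q"
    using index_tuplesD assms(2,3) by auto
  have A: "?A \<in> carrier_mat ?N ?N" and B: "?B \<in> carrier_mat ?N ?N"
    using majorana_word_carrier_mat[OF assms(1)] R S by auto
  have "even (q * q + card (R \<inter> S) + (q + card (R \<inter> S)))" by simp
  then have sign: "(-1::complex) ^ (q * q + card (R \<inter> S)) = (-1) ^ (q + card (R \<inter> S))"
    by (rule neg_one_power_eq_of_even_add)
  have "Psi n q R * Psi n q S = (?c * ?c) \<cdot>\<^sub>m (?A * ?B)"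
    using A B by (simp add: Psi_eq_majorana_word mult_smult_assoc_mat[of _ ?N ?N _ ?N]
        mult_smult_distrib[of _ ?N ?N _ ?N])
  also have "?A * ?B = (-1) ^ (q * q + card (R \<inter> S)) \<cdot>\<^sub>m (?B * ?A)"
    using majorana_word_sorted_comm[OF assms(1) R(1) S(1) R(2) S(2)] R S by simp
  also have "(?c * ?c) \<cdot>\<^sub>m ((-1) ^ (q * q + card (R \<inter> S)) \<cdot>\<^sub>m (?B * ?A)) =
      (-1) ^ (q * q + card (R \<inter> S)) \<cdot>\<^sub>m (Psi n q S * Psi n q R)"
    using A B by (simp add: Psi_eq_majorana_word mult_smult_assoc_mat[of _ ?N ?N _ ?N]
        mult_smult_distrib[of _ ?N ?N _ ?N] mult.commute)
  finally show ?thesis using sign by simp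
qed

lemma sign_commuting_involutions_Psi:
  "even n \<Longrightarrow> sign_commuting_involutions (2 ^ (n div 2)) (Psi n q) (index_tuples n q) (\<lambda>R S. q + card (R \<inter> S))"
  by unfold_locales (rule Psi_carrier_mat Psi_square Psi_comm; assumption)+

lemma count_list_map_distinct:
  "distinct xs \<Longrightarrow> count_list (map f xs) y = card {x\<in>set xs. f x = y}"
proof (induction xs)
  case (Cons x xs)
  have "x \<notin> {z\<in>set xs. f z = y}" using Cons.prems by simp
  moreover have "{z\<in>set (x # xs). f z = y} =
      (if f x = y then insert x {z\<in>set xs. f z = y} else {z\<in>set xs. f z = y})"
    by auto
  ultimately show ?case using Cons by simp
qed simp

lemma even_count_list_of_even_ker_part:
  assumes "\<forall>B\<in>ker_part k \<alpha>. even (card B)"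
  shows "even (count_list (map \<alpha> [1..<k+1]) R)"
proof (cases "\<exists>i\<in>{1..k}. \<alpha> i = R")
  case True
  then obtain i where i: "i \<in> {1..k}" "\<alpha> i = R" by blast
  then have "{j\<in>{1..k}. \<alpha> j = R} \<in> ker_part k \<alpha>"
    unfolding ker_part_def by blast
  then have "even (card {j\<in>{1..k}. \<alpha> j = R})" using assms by blast
  moreover have "set [1..<k+1] = {1..k}" by auto
  ultimately show ?thesis
    using count_list_map_distinct[of "[1..<k+1]" \<alpha> R] by (simp del: upt_Suc)
next
  case False
  then have "R \<notin> set (map \<alpha> [1..<k+1])" by auto
  then show ?thesis by simp
qed

lemma part_le_ker_part_const:
  assumes "part_le \<pi> (ker_part k \<alpha>)" "B \<in> \<pi>" "x \<in> B" "y \<in> B"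
  shows "\<alpha> x = \<alpha> y"
proof -
  obtain C where C: "C \<in> ker_part k \<alpha>" "x \<in> C" "y \<in> C"
    using assms unfolding part_le_def by blast
  then obtain i where "C = {j\<in>{1..k}. \<alpha> j = \<alpha> i}"
    unfolding ker_part_def by blast
  then show ?thesis using C(2,3) by simp
qed

lemma ntr_smult_one_mat: "N > 0 \<Longrightarrow> ntr (c \<cdot>\<^sub>m 1\<^sub>m N) = c"
  by (simp add: ntr_def)

lemma neg_one_power_smult_one_mat:
  "(-1::complex) ^ k \<cdot>\<^sub>m 1\<^sub>m N = 1\<^sub>m N \<or> (-1::complex) ^ k \<cdot>\<^sub>m 1\<^sub>m N = - 1\<^sub>m N"
proof (cases "even k")
  case False
  have "(-1::complex) \<cdot>\<^sub>m 1\<^sub>m N = - 1\<^sub>m N" by (rule eq_matI) auto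
  then show ?thesis using False by simp
qed simp

lemma Psi_alpha_eq_word_prod:
  assumes "even n"
  shows "Psi_alpha n q k \<alpha> =
    sign_commuting_involutions.word_prod (2 ^ (n div 2)) (Psi n q) (map \<alpha> [1..<k+1])"
proof -
  interpret Psi: sign_commuting_involutions "2 ^ (n div 2)" "Psi n q" "index_tuples n q" "\<lambda>R S. q + card (R \<inter> S)"
    by (rule sign_commuting_involutions_Psi[OF assms])
  show ?thesis by (simp add: Psi_alpha_def Psi.word_prod_def comp_def del: upt_Suc)
qed

lemma Psi_alpha_even_ker_part:
  assumes "even n" "\<forall>i\<in>{1..k}. \<alpha> i \<in> index_tuples n q" "\<forall>B\<in>ker_part k \<alpha>. even (card B)"
  shows "\<exists>j. Psi_alpha n q k \<alpha> = (-1) ^ j \<cdot>\<^sub>m 1\<^sub>m (2 ^ (n div 2))"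
proof -
  interpret Psi: sign_commuting_involutions "2 ^ (n div 2)" "Psi n q" "index_tuples n q" "\<lambda>R S. q + card (R \<inter> S)"
    by (rule sign_commuting_involutions_Psi[OF assms(1)])
  have "set (map \<alpha> [1..<k+1]) \<subseteq> index_tuples n q" using assms(2) by auto
  moreover have "\<forall>R. even (count_list (map \<alpha> [1..<k+1]) R)"
    using assms(3) by (intro allI even_count_list_of_even_ker_part)
  ultimately show ?thesis
    unfolding Psi_alpha_eq_word_prod[OF assms(1)] by (rule Psi.word_prod_even_counts)
qed

lemma Psi_alpha_pair_partition:
  assumes "even n" "\<forall>i\<in>{1..k}. \<alpha> i \<in> index_tuples n q"
    and "\<pi> \<in> pair_partitions k" "part_le \<pi> (ker_part k \<alpha>)"
  shows "Psi_alpha n q k \<alpha> =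
    (-1) ^ (\<Sum>p\<in>crossing_pairs \<pi>. q + card (\<Inter>(blk_val \<alpha> ` p))) \<cdot>\<^sub>m 1\<^sub>m (2 ^ (n div 2))"
proof -
  interpret Psi: sign_commuting_involutions "2 ^ (n div 2)" "Psi n q" "index_tuples n q" "\<lambda>R S. q + card (R \<inter> S)"
    by (rule sign_commuting_involutions_Psi[OF assms(1)])
  have upt: "[1..<k+1] = sorted_list_of_set {1..k}"
    by (simp add: atLeastLessThanSuc_atLeastAtMost[symmetric] del: upt_Suc)
  have part: "is_partition \<pi> {1..k}" "\<forall>B\<in>\<pi>. card B = 2"
    using assms(3) by (auto simp: pair_partitions_def)
  have const: "\<forall>B\<in>\<pi>. \<forall>x\<in>B. \<forall>y\<in>B. \<alpha> x = \<alpha> y"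
    by (intro ballI) (rule part_le_ker_part_const[OF assms(4)])
  have sign: "\<forall>V\<in>\<pi>. \<forall>W\<in>\<pi>. V \<noteq> W \<longrightarrow>
      q + card (\<Inter>(blk_val \<alpha> ` {V, W})) = q + card (blk_val \<alpha> V \<inter> blk_val \<alpha> W)"
    by simp
  have "\<alpha> ` {1..k} \<subseteq> index_tuples n q" using assms(2) by auto
  then show ?thesis
    unfolding Psi_alpha_eq_word_prod[OF assms(1)] upt
    by (rule Psi.word_prod_pair_partition[where h = "\<lambda>p. q + card (\<Inter>(blk_val \<alpha> ` p))",
          OF finite_atLeastAtMost _ part const sign])
qed

theorem lemma3p3:
  fixes n q k :: nat and \<alpha> :: "nat \<Rightarrow> nat set"
  assumes "even n" and "1 \<le> q" and "q \<le> n div 2"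
    and "\<forall>i\<in>{1..k}. \<alpha> i \<in> index_tuples n q"
  shows "((\<forall>B\<in>ker_part k \<alpha>. even (card B)) \<longrightarrow>
            (Psi_alpha n q k \<alpha> = 1\<^sub>m (2 ^ (n div 2)) \<or> Psi_alpha n q k \<alpha> = - 1\<^sub>m (2 ^ (n div 2))))
       \<and> (\<forall>\<pi>\<in>pair_partitions k. part_le \<pi> (ker_part k \<alpha>) \<longrightarrow>
            ntr (Psi_alpha n q k \<alpha>) =
              (-1) ^ (q * cr \<pi> + (\<Sum>p\<in>crossing_pairs \<pi>. card (\<Inter>((blk_val \<alpha>) ` p)))))"
proof -
  show ?thesis
  proof (intro conjI impI ballI)
    assume "\<forall>B\<in>ker_part k \<alpha>. even (card B)"
    then obtain j where j: "Psi_alpha n q k \<alpha> = (-1) ^ j \<cdot>\<^sub>m 1\<^sub>m (2 ^ (n div 2))"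
      using Psi_alpha_even_ker_part[OF assms(1,4)] by blast
    show "Psi_alpha n q k \<alpha> = 1\<^sub>m (2 ^ (n div 2)) \<or> Psi_alpha n q k \<alpha> = - 1\<^sub>m (2 ^ (n div 2))"
      unfolding j by (rule neg_one_power_smult_one_mat)
  next
    fix \<pi> assume "\<pi> \<in> pair_partitions k" "part_le \<pi> (ker_part k \<alpha>)"
    then have "Psi_alpha n q k \<alpha> =
        (-1) ^ (\<Sum>p\<in>crossing_pairs \<pi>. q + card (\<Inter>(blk_val \<alpha> ` p))) \<cdot>\<^sub>m 1\<^sub>m (2 ^ (n div 2))"
      by (rule Psi_alpha_pair_partition[OF assms(1,4)])
    then show "ntr (Psi_alpha n q k \<alpha>) =
        (-1) ^ (q * cr \<pi> + (\<Sum>p\<in>crossing_pairs \<pi>. card (\<Inter>(blk_val \<alpha> ` p))))"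
      by (simp add: ntr_smult_one_mat sum.distrib cr_def mult.commute)
  qed
qed

end
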